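(* Let $n_t\ge 1$. The product $\prod_{i=1}^{n_t} C^2X_{t_i}$ of $n_t$ Toffoli gates that share the same two control qubits $c_1,c_2$ and have pairwise distinct target qubits $t_1,\dots,t_{n_t}$ (all distinct from the controls) can be implemented exactly, without auxiliary qubits, by a circuit of single-qubit gates and $2n_t+4$ CNOT gates.
   Context: $C^2X_{t}$ denotes the Toffoli gate: it flips target qubit $t$ if and only if both control qubits are in state $|1\rangle$. *)

theory Defs
  imports Complex_Main
begin

text \<open>n-qubit operators as matrices indexed by computational basis states.
  A basis state of n qubits is a bit assignment x :: nat \<Rightarrow> bool that is False
  outside the qubit indices 0..n-1.\<close>

type_synonym state = "nat \<Rightarrow> bool"
type_synonym op = "state \<Rightarrow> state \<Rightarrow> complex"

definition basis :: "nat \<Rightarrow> state set" where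
  "basis n = {x. \<forall>i. n \<le> i \<longrightarrow> \<not> x i}"

definition id_op :: op where
  "id_op x y = (if x = y then 1 else 0)"

definition op_mult :: "nat \<Rightarrow> op \<Rightarrow> op \<Rightarrow> op" where
  "op_mult n A B x y = (\<Sum>z\<in>basis n. A x z * B z y)"

text \<open>2x2 unitary matrices (single-qubit gates), indexed by bool (False = |0>, True = |1>).\<close>
definition unitary2 :: "(bool \<Rightarrow> bool \<Rightarrow> complex) \<Rightarrow> bool" where
  "unitary2 U \<longleftrightarrow> (\<forall>i j. (\<Sum>k\<in>UNIV. cnj (U k i) * U k j) = (if i = j then 1 else 0))"

datatype gate = Single nat "bool \<Rightarrow> bool \<Rightarrow> complex" | CNOT nat nat

fun gate_op :: "gate \<Rightarrow> op" where
  "gate_op (Single q U) x y = (if (\<forall>i. i \<noteq> q \<longrightarrow> x i = y i) then U (x q) (y q) else 0)"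
| "gate_op (CNOT c t) x y = (if x = y(t := (y t \<noteq> y c)) then 1 else 0)"

fun gate_wf :: "nat \<Rightarrow> gate \<Rightarrow> bool" where
  "gate_wf n (Single q U) \<longleftrightarrow> q < n \<and> unitary2 U"
| "gate_wf n (CNOT c t) \<longleftrightarrow> c < n \<and> t < n \<and> c \<noteq> t"

fun is_cnot :: "gate \<Rightarrow> bool" where
  "is_cnot (CNOT _ _) = True"
| "is_cnot (Single _ _) = False"

definition cnot_count :: "gate list \<Rightarrow> nat" where
  "cnot_count gs = length (filter is_cnot gs)"

text \<open>A circuit is a list of gates applied in order (first gate first);
  its operator is the product M_last \<cdot> ... \<cdot> M_first.\<close>
fun circuit_op :: "nat \<Rightarrow> gate list \<Rightarrow> op" where
  "circuit_op n [] = id_op"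
| "circuit_op n (g # gs) = op_mult n (circuit_op n gs) (gate_op g)"

definition toffoli_op :: "nat \<Rightarrow> nat \<Rightarrow> nat \<Rightarrow> op" where
  "toffoli_op c1 c2 t x y = (if x = y(t := (y t \<noteq> (y c1 \<and> y c2))) then 1 else 0)"

fun toffoli_prod :: "nat \<Rightarrow> nat \<Rightarrow> nat \<Rightarrow> nat list \<Rightarrow> op" where
  "toffoli_prod n c1 c2 [] = id_op"
| "toffoli_prod n c1 c2 (t # ts) = op_mult n (toffoli_op c1 c2 t) (toffoli_prod n c1 c2 ts)"

end

theory Submission
  imports Defs
begin

(* A single Toffoli gate on target t1 costs six CNOTs: the standard Clifford+T circuit, in which
   Hadamards on the target turn a CCZ phase into a bit flip. The other targets are served by
   fanning out CNOTs from t1 before and after that Toffoli: a target r is XORed with y(t1) before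
   and with y(t1) xor (y(c1) and y(c2)) after it, so r is flipped exactly when both controls are
   set. The two fan-outs cost 2(nt - 1) further CNOTs. *)

lemma finite_basis: "finite (basis n)"
proof -
  have "basis n \<subseteq> (\<lambda>S i. i \<in> S) ` Pow {..<n}"
  proof
    fix x assume "x \<in> basis n"
    then have "{i. x i} \<in> Pow {..<n}" by (auto simp: basis_def not_le[symmetric])
    moreover have "x = (\<lambda>i. i \<in> {i. x i})" by simp
    ultimately show "x \<in> (\<lambda>S i. i \<in> S) ` Pow {..<n}" by blast
  qed
  then show ?thesis by (rule finite_subset) simp
qed

lemma fun_upd_in_basis [simp]: "y \<in> basis n \<Longrightarrow> q < n \<Longrightarrow> y(q := v) \<in> basis n"
  by (auto simp: basis_def)

definition perm_op :: "(state \<Rightarrow> state) \<Rightarrow> op" where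
  "perm_op f x y = (if x = f y then 1 else 0)"

lemma op_mult_perm_op_right:
  assumes "f y \<in> basis n"
  shows "op_mult n A (perm_op f) x y = A x (f y)"
  using assms by (simp add: op_mult_def perm_op_def finite_basis if_distrib cong: if_cong)

lemma id_op_eq_perm_op: "id_op = perm_op id"
  by (simp add: fun_eq_iff id_op_def perm_op_def)

definition flip_on :: "nat set \<Rightarrow> bool \<Rightarrow> state \<Rightarrow> state" where
  "flip_on R b y = (\<lambda>i. if i \<in> R then y i \<noteq> b else y i)"

lemma flip_on_in_basis: "y \<in> basis n \<Longrightarrow> \<forall>i\<in>R. i < n \<Longrightarrow> flip_on R b y \<in> basis n"
  by (auto simp: basis_def flip_on_def)

lemma flip_on_outside [simp]: "i \<notin> R \<Longrightarrow> flip_on R b y i = y i"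
  by (simp add: flip_on_def)

lemma flip_on_singleton: "flip_on {t} b y = y(t := (y t \<noteq> b))"
  by (simp add: fun_eq_iff flip_on_def)

lemma flip_on_flip_on_disjoint: "A \<inter> B = {} \<Longrightarrow> flip_on A b (flip_on B b y) = flip_on (A \<union> B) b y"
  by (auto simp: fun_eq_iff flip_on_def)

lemma gate_op_CNOT_eq_perm_op: "gate_op (CNOT c t) = perm_op (\<lambda>y. flip_on {t} (y c) y)"
  by (simp add: fun_eq_iff perm_op_def flip_on_singleton)

lemma toffoli_op_eq_perm_op: "toffoli_op c1 c2 t = perm_op (\<lambda>y. flip_on {t} (y c1 \<and> y c2) y)"
  by (simp add: fun_eq_iff toffoli_op_def perm_op_def flip_on_singleton)

lemma toffoli_prod_eq_perm_op:
  assumes "y \<in> basis n" "distinct (c1 # c2 # ts)" "\<forall>t\<in>set ts. t < n"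
  shows "toffoli_prod n c1 c2 ts x y = perm_op (\<lambda>y. flip_on (set ts) (y c1 \<and> y c2) y) x y"
  using assms
proof (induction ts arbitrary: x)
  case Nil
  then show ?case by (simp add: id_op_eq_perm_op flip_on_def id_def)
next
  case (Cons t ts)
  let ?F = "\<lambda>y. flip_on (set ts) (y c1 \<and> y c2) y"
  have "toffoli_prod n c1 c2 (t # ts) x y = op_mult n (toffoli_op c1 c2 t) (perm_op ?F) x y"
    using Cons by (simp add: op_mult_def)
  also have "\<dots> = toffoli_op c1 c2 t x (?F y)"
    using Cons.prems by (simp add: op_mult_perm_op_right flip_on_in_basis)
  also have "\<dots> = perm_op (\<lambda>y. flip_on (set (t # ts)) (y c1 \<and> y c2) y) x y"
  proof -
    have "flip_on {t} (?F y c1 \<and> ?F y c2) (?F y) = flip_on ({t} \<union> set ts) (y c1 \<and> y c2) y"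
      using Cons.prems(2) by (simp add: flip_on_flip_on_disjoint)
    then show ?thesis by (simp add: toffoli_op_eq_perm_op perm_op_def)
  qed
  finally show ?case .
qed

declare circuit_op.simps(2) [simp del]

lemma circuit_op_CNOT_Cons:
  assumes "y \<in> basis n" "t < n"
  shows "circuit_op n (CNOT c t # gs) x y = circuit_op n gs x (flip_on {t} (y c) y)"
  using assms by (simp add: circuit_op.simps gate_op_CNOT_eq_perm_op op_mult_perm_op_right flip_on_in_basis)

lemma gate_op_Single_eq_sum:
  "gate_op (Single q U) z y = (\<Sum>v\<in>UNIV. if z = y(q := v) then U v (y q) else 0)"
proof (cases "\<forall>i. i \<noteq> q \<longrightarrow> z i = y i")
  case True
  then have "z = y(q := v) \<longleftrightarrow> v = z q" for v
    by (auto simp: fun_eq_iff)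
  with True show ?thesis by simp
next
  case False
  then have "z \<noteq> y(q := v)" for v by auto
  then have "(\<Sum>v\<in>UNIV. if z = y(q := v) then U v (y q) else 0) = 0" by simp
  with False show ?thesis by (simp only: gate_op.simps if_False)
qed

lemma circuit_op_Single_Cons:
  assumes "y \<in> basis n" "q < n"
  shows "circuit_op n (Single q U # gs) x y = (\<Sum>v\<in>UNIV. circuit_op n gs x (y(q := v)) * U v (y q))"
proof -
  have "circuit_op n (Single q U # gs) x y
      = (\<Sum>z\<in>basis n. \<Sum>v\<in>UNIV. circuit_op n gs x z * (if z = y(q := v) then U v (y q) else 0))"
    by (simp only: circuit_op.simps op_mult_def gate_op_Single_eq_sum sum_distrib_left)
  also have "\<dots> = (\<Sum>v\<in>UNIV. \<Sum>z\<in>basis n. circuit_op n gs x z * (if z = y(q := v) then U v (y q) else 0))"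
    by (rule sum.swap)
  also have "\<dots> = (\<Sum>v\<in>UNIV. circuit_op n gs x (y(q := v)) * U v (y q))"
    using assms by (simp add: finite_basis if_distrib cong: if_cong)
  finally show ?thesis .
qed

definition phase_gate :: "nat \<Rightarrow> complex \<Rightarrow> gate" where
  "phase_gate q w = Single q (\<lambda>i j. if i = j then (if j then w else 1) else 0)"

lemma circuit_op_phase_gate_Cons:
  assumes "y \<in> basis n" "q < n"
  shows "circuit_op n (phase_gate q w # gs) x y = circuit_op n gs x y * (if y q then w else 1)"
  using assms by (cases "y q") (simp_all add: phase_gate_def circuit_op_Single_Cons UNIV_bool fun_upd_idem)

definition omega8 :: complex where
  "omega8 = cis (pi / 4)"

lemma omega8_pow_4: "omega8 ^ 4 = -1"
  by (simp add: omega8_def DeMoivre)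

lemma omega8_pow_16: "omega8 ^ 16 = 1"
  using omega8_pow_4 power_mult[of omega8 4 4] by simp

definition t_gate :: "nat \<Rightarrow> nat \<Rightarrow> gate" where
  "t_gate q k = phase_gate q (omega8 ^ k)"

lemma circuit_op_t_gate_Cons:
  assumes "y \<in> basis n" "q < n"
  shows "circuit_op n (t_gate q k # gs) x y = circuit_op n gs x y * omega8 ^ (if y q then k else 0)"
  using assms by (simp add: t_gate_def circuit_op_phase_gate_Cons)

lemma mult_omega8_powers:
  "omega8 ^ i * omega8 ^ j = omega8 ^ (i + j)" "omega8 ^ i * (omega8 ^ j * z) = omega8 ^ (i + j) * z"
  by (simp_all add: power_add)

(* The CNOTs make the wires carry the parities a xor b xor c and the two-variable parities in
   turn; T puts the phase omega8 on a, b, c and a xor b xor c, and T^7 = T^dagger puts omega8^7 on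
   the two-variable parities. Since a + b + c - (a xor b) - (a xor c) - (b xor c) + (a xor b xor c)
   = 4abc, the total phase is (-1)^abc. *)
definition ccz_circuit :: "nat \<Rightarrow> nat \<Rightarrow> nat \<Rightarrow> gate list" where
  "ccz_circuit a b c =
    [CNOT b c, t_gate c 7, CNOT a c, t_gate c 1, CNOT b c, t_gate c 7, CNOT a c, t_gate b 1,
     t_gate c 1, CNOT a b, t_gate a 1, t_gate b 7, CNOT a b]"

lemma circuit_op_ccz_circuit_append:
  assumes "y \<in> basis n" "a < n" "b < n" "c < n" "distinct [a, b, c]"
  shows "circuit_op n (ccz_circuit a b c @ gs) x y
       = circuit_op n gs x y * (if y a \<and> y b \<and> y c then -1 else 1)"
proof -
  \<comment> \<open>the shape in which simp leaves \<open>omega8 ^ 4\<close>\<close>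
  have omega8_4: "omega8 * (omega8 * (omega8 * omega8)) = -1"
    using omega8_pow_4 by (simp add: power4_eq_xxxx mult.assoc)
  show ?thesis
    using assms
    apply (simp add: ccz_circuit_def circuit_op_CNOT_Cons circuit_op_t_gate_Cons flip_on_singleton
        fun_upd_idem mult.assoc mult_omega8_powers)
    by (cases "y a"; cases "y b"; cases "y c") (simp_all add: fun_upd_idem omega8_4 omega8_pow_16)
qed

definition hadamard_matrix :: "bool \<Rightarrow> bool \<Rightarrow> complex" where
  "hadamard_matrix i j = (if i \<and> j then -1 else 1) / complex_of_real (sqrt 2)"

lemma sqrt2_mult_self: "complex_of_real (sqrt 2) * complex_of_real (sqrt 2) = 2"
  by (simp flip: of_real_mult)

lemma hadamard_phase_hadamard:
  "(\<Sum>v\<in>UNIV. hadamard_matrix u v * (if p \<and> v then -1 else 1) * hadamard_matrix v w)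
     = (if u = (w \<noteq> p) then 1 else 0)"
  using sqrt2_mult_self
  by (cases u; cases p; cases w) (simp_all add: UNIV_bool hadamard_matrix_def field_simps)

definition toffoli_circuit :: "nat \<Rightarrow> nat \<Rightarrow> nat \<Rightarrow> gate list" where
  "toffoli_circuit a b c = Single c hadamard_matrix # ccz_circuit a b c @ [Single c hadamard_matrix]"

lemma circuit_op_toffoli_circuit_append:
  assumes y: "y \<in> basis n" and abc: "a < n" "b < n" "c < n" "distinct [a, b, c]"
  shows "circuit_op n (toffoli_circuit a b c @ gs) x y = circuit_op n gs x (flip_on {c} (y a \<and> y b) y)"
proof -
  let ?H = "Single c hadamard_matrix"
  let ?C = "\<lambda>u. circuit_op n gs x (y(c := u))"
  have "circuit_op n (toffoli_circuit a b c @ gs) x y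
      = (\<Sum>v\<in>UNIV. circuit_op n (ccz_circuit a b c @ ?H # gs) x (y(c := v)) * hadamard_matrix v (y c))"
    using y abc by (simp add: toffoli_circuit_def circuit_op_Single_Cons)
  also have "\<dots> = (\<Sum>v\<in>UNIV. circuit_op n (?H # gs) x (y(c := v))
                      * (if y a \<and> y b \<and> v then -1 else 1) * hadamard_matrix v (y c))"
    using y abc by (simp add: circuit_op_ccz_circuit_append)
  also have "\<dots> = (\<Sum>v\<in>UNIV. \<Sum>u\<in>UNIV. ?C u
                      * (hadamard_matrix u v * (if y a \<and> y b \<and> v then -1 else 1) * hadamard_matrix v (y c)))"
    using y abc by (simp add: circuit_op_Single_Cons sum_distrib_right mult.assoc)
  also have "\<dots> = (\<Sum>u\<in>UNIV. ?C u * (if u = (y c \<noteq> (y a \<and> y b)) then 1 else 0))"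
    using hadamard_phase_hadamard[of _ "y a \<and> y b"] by (subst sum.swap) (simp flip: sum_distrib_left)
  also have "\<dots> = circuit_op n gs x (flip_on {c} (y a \<and> y b) y)"
    by (simp add: flip_on_singleton if_distrib cong: if_cong)
  finally show ?thesis .
qed

lemma circuit_op_fanout_append:
  assumes "y \<in> basis n" "\<forall>r\<in>set rs. r < n" "distinct rs" "t \<notin> set rs"
  shows "circuit_op n (map (CNOT t) rs @ gs) x y = circuit_op n gs x (flip_on (set rs) (y t) y)"
  using assms
proof (induction rs arbitrary: y)
  case Nil
  then show ?case by (simp add: flip_on_def)
next
  case (Cons r rs)
  let ?y' = "flip_on {r} (y t) y"
  have "circuit_op n (map (CNOT t) (r # rs) @ gs) x y = circuit_op n (map (CNOT t) rs @ gs) x ?y'"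
    using Cons.prems by (simp add: circuit_op_CNOT_Cons)
  also have "\<dots> = circuit_op n gs x (flip_on (set rs) (?y' t) ?y')"
    using Cons by (simp add: flip_on_in_basis)
  also have "flip_on (set rs) (?y' t) ?y' = flip_on (set (r # rs)) (y t) y"
    using Cons.prems by (simp add: flip_on_flip_on_disjoint)
  finally show ?case .
qed

lemma flip_on_fanout_flip_fanout:
  assumes "t \<notin> R" and "z = flip_on {t} b (flip_on R (y t) y)"
  shows "flip_on R (z t) z = flip_on (insert t R) b y"
  using assms by (auto simp: fun_eq_iff flip_on_def)

lemma circuit_op_fanout_toffoli_fanout:
  assumes y: "y \<in> basis n" and distinct: "distinct (c1 # c2 # t # rs)"
    and bounded: "\<forall>q\<in>set (c1 # c2 # t # rs). q < n"
  shows "circuit_op n (map (CNOT t) rs @ toffoli_circuit c1 c2 t @ map (CNOT t) rs) x y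
       = perm_op (\<lambda>y. flip_on (set (t # rs)) (y c1 \<and> y c2) y) x y"
proof -
  define y1 where "y1 = flip_on (set rs) (y t) y"
  define z where "z = flip_on {t} (y c1 \<and> y c2) y1"
  have y1: "y1 \<in> basis n" "y1 c1 = y c1" "y1 c2 = y c2"
    using y distinct bounded by (auto simp: y1_def flip_on_in_basis)
  have "circuit_op n (map (CNOT t) rs @ toffoli_circuit c1 c2 t @ map (CNOT t) rs) x y
      = circuit_op n (toffoli_circuit c1 c2 t @ map (CNOT t) rs) x y1"
    unfolding y1_def using y distinct bounded by (intro circuit_op_fanout_append) auto
  also have "\<dots> = circuit_op n (map (CNOT t) rs @ []) x z"
    using y1 distinct bounded by (simp add: z_def circuit_op_toffoli_circuit_append)
  also have "\<dots> = circuit_op n [] x (flip_on (set rs) (z t) z)"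
    using y1 distinct bounded by (intro circuit_op_fanout_append) (simp_all add: z_def flip_on_in_basis)
  also have "flip_on (set rs) (z t) z = flip_on (set (t # rs)) (y c1 \<and> y c2) y"
    using distinct by (simp add: flip_on_fanout_flip_fanout z_def y1_def)
  finally show ?thesis
    by (simp add: id_op_eq_perm_op perm_op_def)
qed

lemma cnot_count_append: "cnot_count (gs @ hs) = cnot_count gs + cnot_count hs"
  by (simp add: cnot_count_def)

lemma cnot_count_fanout: "cnot_count (map (CNOT t) rs) = length rs"
  by (simp add: cnot_count_def comp_def)

lemma cnot_count_toffoli_circuit: "cnot_count (toffoli_circuit a b c) = 6"
  by (simp add: cnot_count_def toffoli_circuit_def ccz_circuit_def t_gate_def phase_gate_def)

lemma gate_wf_phase_gate: "gate_wf n (phase_gate q w) \<longleftrightarrow> q < n \<and> cnj w * w = 1"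
  by (auto simp: phase_gate_def unitary2_def UNIV_bool)

lemma cnj_omega8_mult: "cnj omega8 * omega8 = 1"
  by (simp add: omega8_def cis_cnj cis_mult)

lemma unitary2_hadamard_matrix: "unitary2 hadamard_matrix"
  using sqrt2_mult_self by (auto simp: unitary2_def UNIV_bool hadamard_matrix_def field_simps)

lemma gate_wf_toffoli_circuit:
  "a < n \<Longrightarrow> b < n \<Longrightarrow> c < n \<Longrightarrow> distinct [a, b, c] \<Longrightarrow> \<forall>g\<in>set (toffoli_circuit a b c). gate_wf n g"
  by (simp add: toffoli_circuit_def ccz_circuit_def t_gate_def gate_wf_phase_gate
      cnj_omega8_mult unitary2_hadamard_matrix flip: power_mult_distrib)

theorem lemma5:
  fixes n c1 c2 :: nat and ts :: "nat list"
  assumes "length ts \<ge> 1"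
    and "distinct (c1 # c2 # ts)"
    and "\<forall>q\<in>set (c1 # c2 # ts). q < n"
  shows "\<exists>gs. (\<forall>g\<in>set gs. gate_wf n g)
           \<and> cnot_count gs = 2 * length ts + 4
           \<and> (\<forall>x\<in>basis n. \<forall>y\<in>basis n.
                 circuit_op n gs x y = toffoli_prod n c1 c2 ts x y)"
proof -
  obtain t rs where ts: "ts = t # rs"
    using assms(1) by (cases ts) auto
  let ?gs = "map (CNOT t) rs @ toffoli_circuit c1 c2 t @ map (CNOT t) rs"
  have "\<forall>g\<in>set ?gs. gate_wf n g"
    using gate_wf_toffoli_circuit[of c1 n c2 t] assms(2,3) by (auto simp: ts)
  moreover have "cnot_count ?gs = 2 * length ts + 4"
    by (simp add: ts cnot_count_append cnot_count_fanout cnot_count_toffoli_circuit)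
  moreover have "circuit_op n ?gs x y = toffoli_prod n c1 c2 ts x y" if "y \<in> basis n" for x y
    using circuit_op_fanout_toffoli_fanout[OF that, of c1 c2 t rs] toffoli_prod_eq_perm_op[OF that assms(2)]
      assms(2,3) unfolding ts by simp
  ultimately show ?thesis
    by (intro exI[of _ ?gs]) simp
qed

end
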